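(* Let $q$ be a prime power, $s\geq 2$, $V=\mathbb{F}_{q^s}^3$, and let $W$ be an $(s+1)$-dimensional $\mathbb{F}_q$-subspace of $V$ such that $\mathcal{L}_W$ is a nontrivial blocking set of $\mathrm{PG}(2,q^s)$ (i.e. $\mathcal{L}_W$ is not a line) and $\mathcal{L}_W$ has a point of weight $s-1$. Then $\mathcal{L}_W$ is projectively equivalent to $\mathcal{L}_U$, where $U=\{(x,\mathrm{Tr}_{q^s/q}(x),y): x\in\mathbb{F}_{q^s},\ y\in\mathbb{F}_q\}$.
   Context: Points of $\mathrm{PG}(2,q^s)$ are the 1-dimensional $\mathbb{F}_{q^s}$-subspaces $\langle \vec v\rangle_{\mathbb{F}_{q^s}}$ of $V=\mathbb{F}_{q^s}^3$, and lines are the 2-dimensional $\mathbb{F}_{q^s}$-subspaces. For an $\mathbb{F}_q$-subspace $U$ of $V$, $\mathcal{L}_U=\{\langle \vec v\rangle_{\mathbb{F}_{q^s}} : \vec v\in U\setminus\{0\}\}$. The weight of a point $P=\langle\vec v\rangle_{\mathbb{F}_{q^s}}$ with respect to $\mathcal{L}_U$ is $\dim_{\mathbb{F}_q}(U\cap \langle\vec v\rangle_{\mathbb{F}_{q^s}})$. $\mathrm{Tr}_{q^s/q}(x)=x+x^q+\dots+x^{q^{s-1}}$. A blocking set is a point set meeting every line. *)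

theory Defs
  imports "HOL-Library.Product_Plus" "HOL-Library.Cardinality" "HOL-Computational_Algebra.Primes"
begin

type_synonym 'a vec3 = "'a \<times> 'a \<times> 'a"

definition smul :: "'a::times \<Rightarrow> 'a vec3 \<Rightarrow> 'a vec3" where
  "smul c v = (c * fst v, c * fst (snd v), c * snd (snd v))"

text \<open>The subfield F_q of a field of order q^s: the fixed points of x \<mapsto> x^q.\<close>
definition subfield_q :: "nat \<Rightarrow> 'a::field set" where
  "subfield_q q = {x. x ^ q = x}"

definition span_over :: "'a::field set \<Rightarrow> 'a vec3 set \<Rightarrow> 'a vec3 set" where
  "span_over K B = {v. \<exists>c. (\<forall>b\<in>B. c b \<in> K) \<and> v = (\<Sum>b\<in>B. smul (c b) b)}"

definition is_subspace :: "'a::field set \<Rightarrow> 'a vec3 set \<Rightarrow> bool" where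
  "is_subspace K U \<longleftrightarrow> 0 \<in> U \<and> (\<forall>u\<in>U. \<forall>v\<in>U. u + v \<in> U) \<and> (\<forall>c\<in>K. \<forall>u\<in>U. smul c u \<in> U)"

definition sub_dim :: "'a::field set \<Rightarrow> 'a vec3 set \<Rightarrow> nat" where
  "sub_dim K U = (LEAST d. \<exists>B. finite B \<and> B \<subseteq> U \<and> card B = d \<and> span_over K B = U)"

definition pt :: "'a::field vec3 \<Rightarrow> 'a vec3 set" where
  "pt v = span_over UNIV {v}"

definition linset :: "'a::field vec3 set \<Rightarrow> 'a vec3 set set" where
  "linset U = {pt v | v. v \<in> U \<and> v \<noteq> 0}"

definition weight :: "'a::field set \<Rightarrow> 'a vec3 set \<Rightarrow> 'a vec3 set \<Rightarrow> nat" where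
  "weight K U P = sub_dim K (U \<inter> P)"

definition is_line :: "'a::field vec3 set \<Rightarrow> bool" where
  "is_line l \<longleftrightarrow> is_subspace UNIV l \<and> sub_dim UNIV l = 2"

definition blocking_set :: "'a::field vec3 set set \<Rightarrow> bool" where
  "blocking_set S \<longleftrightarrow> (\<forall>l. is_line l \<longrightarrow> (\<exists>P\<in>S. P \<subseteq> l))"

definition trace :: "nat \<Rightarrow> nat \<Rightarrow> 'a::field \<Rightarrow> 'a" where
  "trace q s x = (\<Sum>i<s. x ^ (q ^ i))"

definition U_trace :: "nat \<Rightarrow> nat \<Rightarrow> 'a::field vec3 set" where
  "U_trace q s = {(x, trace q s x, y) | x y. y \<in> subfield_q q}"

definition proj_equiv :: "'a::field vec3 set set \<Rightarrow> 'a vec3 set set \<Rightarrow> bool" where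
  "proj_equiv S T \<longleftrightarrow> (\<exists>f. bij f \<and> (\<forall>u v. f (u + v) = f u + f v)
      \<and> (\<forall>c v. f (smul c v) = smul c (f v)) \<and> (\<lambda>P. f ` P) ` S = T)"

end

(* Pick v such that W meets <v> in weight s - 1.  Then S = {z. z v \<in> W} is an F_q-hyperplane
   of F_{q^s}, and every such hyperplane is the kernel of z |-> Tr (l z) for some l \<noteq> 0,
   because the trace forms exhaust the F_q-linear functionals.  Extend W \<inter> <v> by w1 and w2
   to W.  The vectors v, w1, w2 are F_{q^s}-independent: otherwise W lies in the line <v, w1>,
   and a blocking set contained in a line is the whole line.  In the frame (v, w1, w2),
   W = {a v + b w1 + c w2 | Tr (l a) = 0, b, c \<in> F_q}, and for Tr x0 = 1 the substitution
   a = l^-1 (x - Tr x * x0), b = Tr x carries U onto this set. *)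

theory Submission
  imports Defs "HOL-Number_Theory.Residues" "HOL-Computational_Algebra.Polynomial"
begin

section \<open>Finite fields\<close>

text \<open>The library's finite_field_power_card_eq_same needs the type class finite_field; here the
  field only has sort {field, finite}.\<close>

lemma power_card_eq_self:
  fixes x :: "'a::{field,finite}"
  shows "x ^ CARD('a) = x"
proof (cases "x = 0")
  case True
  then show ?thesis by simp
next
  case False
  let ?U = "UNIV - {0::'a}"
  have "bij_betw ((*) x) ?U ?U"
    by (rule bij_betwI[of _ _ _ "\<lambda>y. y / x"]) (use False in auto)
  then have "(\<Prod>y\<in>?U. x * y) = \<Prod>?U"
    by (rule prod.reindex_bij_betw)
  moreover have "\<Prod>?U \<noteq> 0"
    by simp
  ultimately have "x ^ (CARD('a) - 1) = 1"
    by (simp add: prod.distrib card_Diff_singleton)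
  moreover have "Suc (CARD('a) - 1) = CARD('a)"
    using finite_UNIV_card_ge_0[where ?'a = 'a] by simp
  ultimately show ?thesis
    by (metis power_Suc mult_1_right)
qed

lemma prime_CHAR_finite: "prime CHAR('a::{field,finite})"
  by (rule prime_CHAR_semidom) (simp add: finite_imp_CHAR_pos)

lemma CHAR_eq_if_card_prime_power:
  assumes "prime p" "CARD('a::{field,finite}) = p ^ n"
  shows "CHAR('a) = p"
proof -
  have "CHAR('a) dvd p ^ n"
    using CHAR_dvd_CARD[where 'a='a] assms(2) by simp
  then have "CHAR('a) dvd p"
    using prime_CHAR_finite[where 'a='a] prime_dvd_power_nat by blast
  then show ?thesis
    using prime_CHAR_finite[where 'a='a] assms(1) primes_dvd_imp_eq by blast
qed

section \<open>Subfields and vectors\<close>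

definition is_subfield :: "'a::field set \<Rightarrow> bool" where
  "is_subfield K \<longleftrightarrow> 0 \<in> K \<and> 1 \<in> K \<and> (\<forall>x\<in>K. \<forall>y\<in>K. x + y \<in> K \<and> x * y \<in> K)
     \<and> (\<forall>x\<in>K. - x \<in> K \<and> inverse x \<in> K)"

lemma subfield_UNIV: "is_subfield UNIV"
  by (simp add: is_subfield_def)

lemma
  assumes "is_subfield K"
  shows subfield_0: "0 \<in> K" and subfield_1: "1 \<in> K"
    and subfield_add: "x \<in> K \<Longrightarrow> y \<in> K \<Longrightarrow> x + y \<in> K"
    and subfield_mult: "x \<in> K \<Longrightarrow> y \<in> K \<Longrightarrow> x * y \<in> K"
    and subfield_uminus: "x \<in> K \<Longrightarrow> - x \<in> K"
    and subfield_inverse: "x \<in> K \<Longrightarrow> inverse x \<in> K"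
  using assms by (simp_all add: is_subfield_def)

lemma subfield_diff: "is_subfield K \<Longrightarrow> x \<in> K \<Longrightarrow> y \<in> K \<Longrightarrow> x - y \<in> K"
  using subfield_add[of K x "- y"] subfield_uminus[of K y] by simp

lemma card_subfield_ge_2: "is_subfield K \<Longrightarrow> card (K :: 'a::{field,finite} set) \<ge> 2"
  using card_mono[of K "{0, 1}"] subfield_0 subfield_1 by fastforce

lemma smul_add_right: "smul c (u + v) = smul c u + smul c (v::'a::field vec3)"
  and smul_add_left: "smul (a + b) u = smul a u + smul b u"
  and smul_diff_left: "smul (a - b) u = smul a u - smul b u"
  and smul_diff_right: "smul c (u - v) = smul c u - smul c v"
  and smul_minus_left: "smul (- a) u = - smul a u"
  and smul_minus_right: "smul c (- u) = - smul c u"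
  and smul_smul: "smul a (smul b u) = smul (a * b) u"
  and smul_one [simp]: "smul 1 u = u"
  and smul_zero_left [simp]: "smul 0 u = 0"
  and smul_zero_right [simp]: "smul c 0 = 0"
  and fst_smul [simp]: "fst (smul c u) = c * fst u"
  by (simp_all add: smul_def algebra_simps prod_eq_iff)

lemma smul_eq_0_iff: "smul c u = (0::'a::field vec3) \<longleftrightarrow> c = 0 \<or> u = 0"
  by (cases u) (auto simp: smul_def prod_eq_iff)

lemma smul_right_cancel: "u \<noteq> 0 \<Longrightarrow> smul a u = smul b (u::'a::field vec3) \<longleftrightarrow> a = b"
  using smul_eq_0_iff[of "a - b" u] by (auto simp: smul_diff_left)

lemma smul_inverse_cancel: "c \<noteq> 0 \<Longrightarrow> smul (inverse c) (smul c u) = (u::'a::field vec3)"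
  by (simp add: smul_smul)

lemma smul_sum_right: "smul c (sum f A) = (\<Sum>x\<in>A. smul c (f x :: 'a::field vec3))"
  by (induction A rule: infinite_finite_induct) (auto simp: smul_add_right)

section \<open>Subspaces over a subfield\<close>

lemma is_subspace_0: "is_subspace K E \<Longrightarrow> 0 \<in> E"
  and is_subspace_add: "is_subspace K E \<Longrightarrow> u \<in> E \<Longrightarrow> v \<in> E \<Longrightarrow> u + v \<in> E"
  and is_subspace_smul: "is_subspace K E \<Longrightarrow> c \<in> K \<Longrightarrow> u \<in> E \<Longrightarrow> smul c u \<in> E"
  by (simp_all add: is_subspace_def)

lemma is_subspace_diff:
  assumes "is_subfield K" "is_subspace K E" "u \<in> E" "v \<in> E"
  shows "u - (v::'a::field vec3) \<in> E"
proof -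
  have "- 1 \<in> K"
    using assms(1) by (simp add: subfield_1 subfield_uminus)
  then have "u + smul (- 1) v \<in> E"
    using assms(2-4) by (simp add: is_subspace_add is_subspace_smul)
  then show ?thesis
    by (simp add: smul_minus_left)
qed

lemma is_subspace_sum: "is_subspace K E \<Longrightarrow> (\<And>x. x \<in> A \<Longrightarrow> f x \<in> E) \<Longrightarrow> sum f A \<in> E"
  by (induction A rule: infinite_finite_induct) (simp_all add: is_subspace_0 is_subspace_add)

lemma is_subspace_UNIV_imp: "is_subspace UNIV E \<Longrightarrow> is_subspace K E"
  unfolding is_subspace_def by blast

lemma is_subspace_Int: "is_subspace K A \<Longrightarrow> is_subspace K B \<Longrightarrow> is_subspace K (A \<inter> B)"
  unfolding is_subspace_def by blast

lemma span_over_subset: "is_subspace K E \<Longrightarrow> B \<subseteq> E \<Longrightarrow> span_over K B \<subseteq> (E::'a::field vec3 set)"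
  unfolding span_over_def by (auto intro!: is_subspace_sum is_subspace_smul)

lemma is_subspace_span_over:
  assumes K: "is_subfield K"
  shows "is_subspace K (span_over K (B::'a::field vec3 set))"
  unfolding is_subspace_def
proof (intro conjI ballI)
  show "0 \<in> span_over K B"
    unfolding span_over_def by (auto intro!: exI[of _ "\<lambda>_. 0"] subfield_0[OF K])
next
  fix u v assume "u \<in> span_over K B" "v \<in> span_over K B"
  then obtain c d where "\<forall>b\<in>B. c b \<in> K" "u = (\<Sum>b\<in>B. smul (c b) b)"
    and "\<forall>b\<in>B. d b \<in> K" "v = (\<Sum>b\<in>B. smul (d b) b)"
    unfolding span_over_def by blast
  then show "u + v \<in> span_over K B"
    unfolding span_over_def
    by (auto intro!: exI[of _ "\<lambda>b. c b + d b"] subfield_add[OF K] simp: smul_add_left sum.distrib)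
next
  fix a u assume a: "a \<in> K" and "u \<in> span_over K B"
  then obtain c where "\<forall>b\<in>B. c b \<in> K" "u = (\<Sum>b\<in>B. smul (c b) b)"
    unfolding span_over_def by blast
  then show "smul a u \<in> span_over K B"
    unfolding span_over_def
    by (auto intro!: exI[of _ "\<lambda>b. a * c b"] subfield_mult[OF K a] simp: smul_sum_right smul_smul)
qed

lemma mem_span_over:
  assumes "is_subfield K" "finite B" "b \<in> B"
  shows "b \<in> span_over K (B::'a::field vec3 set)"
proof -
  have "(\<Sum>x\<in>B. smul (if x = b then 1 else 0) x) = b"
    using assms(2,3) by (simp add: if_distrib[of "\<lambda>c. smul c _"] sum.delta' cong: if_cong)
  then show ?thesis
    unfolding span_over_def using subfield_0[OF assms(1)] subfield_1[OF assms(1)]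
    by (auto intro!: exI[of _ "\<lambda>x. if x = b then 1 else 0"])
qed

lemma span_over_subspace:
  "is_subfield K \<Longrightarrow> is_subspace K E \<Longrightarrow> finite E \<Longrightarrow> span_over K E = (E::'a::field vec3 set)"
  using span_over_subset[of K E E] mem_span_over[of K E] by blast

definition independent_over :: "'a::field set \<Rightarrow> 'a vec3 set \<Rightarrow> bool" where
  "independent_over K B \<longleftrightarrow>
     (\<forall>c. (\<forall>b\<in>B. c b \<in> K) \<and> (\<Sum>b\<in>B. smul (c b) b) = 0 \<longrightarrow> (\<forall>b\<in>B. c b = 0))"

lemma dependent_imp_span_smaller:
  assumes K: "is_subfield K" and B: "finite B" and dep: "\<not> independent_over K B"
  obtains b where "b \<in> B" "span_over K (B - {b}) = span_over K (B::'a::field vec3 set)"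
proof -
  from dep obtain c b where c: "\<forall>b\<in>B. c b \<in> K" "(\<Sum>b\<in>B. smul (c b) b) = 0"
    and b: "b \<in> B" "c b \<noteq> 0"
    unfolding independent_over_def by blast
  let ?B' = "B - {b}"
  have "smul (c b) b + (\<Sum>x\<in>?B'. smul (c x) x) = 0"
    using c(2) sum.remove[OF B b(1), of "\<lambda>x. smul (c x) x"] by simp
  then have "smul (c b) b = - (\<Sum>x\<in>?B'. smul (c x) x)"
    by (simp add: add_eq_0_iff2)
  then have "b = smul (inverse (c b)) (- (\<Sum>x\<in>?B'. smul (c x) x))"
    using smul_inverse_cancel[OF b(2), of b] by simp
  also have "\<dots> = (\<Sum>x\<in>?B'. smul (- inverse (c b) * c x) x)"
    by (simp add: smul_minus_left smul_minus_right smul_smul smul_sum_right flip: sum_negf)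
  finally have "b \<in> span_over K ?B'"
    unfolding span_over_def using c(1) b K
    by (auto intro!: exI[of _ "\<lambda>x. - inverse (c b) * c x"]
        subfield_mult subfield_uminus subfield_inverse)
  moreover have "?B' \<subseteq> span_over K ?B'"
    using mem_span_over[OF K] B by blast
  ultimately have "B \<subseteq> span_over K ?B'"
    by blast
  then have "span_over K B \<subseteq> span_over K ?B'"
    by (rule span_over_subset[OF is_subspace_span_over[OF K]])
  moreover have "span_over K ?B' \<subseteq> span_over K B"
    using mem_span_over[OF K B] by (intro span_over_subset[OF is_subspace_span_over[OF K]]) auto
  ultimately show ?thesis
    using that b(1) by blast
qed

lemma obtain_basis:
  assumes K: "is_subfield K" and E: "is_subspace K E" and fin: "finite (E::'a::field vec3 set)"
  obtains B where "finite B" "B \<subseteq> E" "span_over K B = E" "card B = sub_dim K E"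
    "independent_over K B"
proof -
  let ?P = "\<lambda>d. \<exists>B. finite B \<and> B \<subseteq> E \<and> card B = d \<and> span_over K B = E"
  have "?P (card E)"
    using fin span_over_subspace[OF K E fin] by blast
  then have "?P (Least ?P)"
    by (rule LeastI)
  then obtain B where B: "finite B" "B \<subseteq> E" "card B = sub_dim K E" "span_over K B = E"
    unfolding sub_dim_def by blast
  have "independent_over K B"
  proof (rule ccontr)
    assume "\<not> independent_over K B"
    then obtain b where "b \<in> B" "span_over K (B - {b}) = span_over K B"
      by (rule dependent_imp_span_smaller[OF K B(1)])
    then have "?P (card (B - {b}))"
      using B(1,2,4) by blast
    moreover have "card (B - {b}) < Least ?P"
      using card_Diff1_less[OF B(1) \<open>b \<in> B\<close>] B(3) unfolding sub_dim_def by simp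
    ultimately show False
      using not_less_Least by blast
  qed
  then show ?thesis
    using that B by blast
qed

lemma card_span_over_independent:
  assumes K: "is_subfield K" and B: "finite B" and ind: "independent_over K (B::'a::field vec3 set)"
  shows "card (span_over K B) = card K ^ card B"
proof -
  define comb where "comb c = (\<Sum>b\<in>B. smul (c b) b)" for c
  have "span_over K B = comb ` (B \<rightarrow>\<^sub>E K)"
  proof
    show "span_over K B \<subseteq> comb ` (B \<rightarrow>\<^sub>E K)"
    proof
      fix v assume "v \<in> span_over K B"
      then obtain c where "\<forall>b\<in>B. c b \<in> K" "v = comb c"
        unfolding span_over_def comb_def by blast
      moreover have "comb (restrict c B) = comb c"
        unfolding comb_def by (rule sum.cong) auto
      ultimately show "v \<in> comb ` (B \<rightarrow>\<^sub>E K)"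
        by (metis image_eqI restrict_PiE_iff)
    qed
    show "comb ` (B \<rightarrow>\<^sub>E K) \<subseteq> span_over K B"
      unfolding span_over_def comb_def by auto
  qed
  moreover have "inj_on comb (B \<rightarrow>\<^sub>E K)"
  proof (rule inj_onI)
    fix c d assume c: "c \<in> B \<rightarrow>\<^sub>E K" and d: "d \<in> B \<rightarrow>\<^sub>E K" and "comb c = comb d"
    then have "(\<Sum>b\<in>B. smul (c b - d b) b) = 0"
      unfolding comb_def by (simp add: smul_diff_left sum_subtractf)
    moreover have "\<forall>b\<in>B. c b - d b \<in> K"
      using c d subfield_diff[OF K] by blast
    ultimately have "\<forall>b\<in>B. c b - d b = 0"
      using ind unfolding independent_over_def by (elim allE[of _ "\<lambda>b. c b - d b"]) blast
    then show "c = d"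
      using c d by (metis PiE_ext right_minus_eq)
  qed
  ultimately show ?thesis
    using B by (simp add: card_image card_PiE)
qed

lemma card_subspace:
  assumes "is_subfield K" "is_subspace K (E::'a::{field,finite} vec3 set)"
  shows "card E = card K ^ sub_dim K E"
proof -
  obtain B where "finite B" "span_over K B = E" "card B = sub_dim K E" "independent_over K B"
    by (rule obtain_basis[OF assms finite])
  then show ?thesis
    using card_span_over_independent[OF assms(1)] by metis
qed

definition adjoin :: "'a::field set \<Rightarrow> 'a vec3 set \<Rightarrow> 'a vec3 \<Rightarrow> 'a vec3 set" where
  "adjoin K A w = {a + smul c w | a c. a \<in> A \<and> c \<in> K}"

lemma mem_adjoin_iff: "x \<in> adjoin K A w \<longleftrightarrow> (\<exists>a\<in>A. \<exists>c\<in>K. x = a + smul c w)"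
  unfolding adjoin_def by blast

lemma adjoin_memI: "a \<in> A \<Longrightarrow> c \<in> K \<Longrightarrow> a + smul c w \<in> adjoin K A w"
  unfolding adjoin_def by blast

lemma is_subspace_adjoin:
  assumes K: "is_subfield K" and A: "is_subspace K A"
  shows "is_subspace K (adjoin K A (w::'a::field vec3))"
  unfolding is_subspace_def
proof (intro conjI ballI)
  show "0 \<in> adjoin K A w"
    using adjoin_memI[OF is_subspace_0[OF A] subfield_0[OF K], of w] by simp
next
  fix u v assume "u \<in> adjoin K A w" "v \<in> adjoin K A w"
  then obtain a c a' c' where "u = a + smul c w" "v = a' + smul c' w" "a \<in> A" "a' \<in> A" "c \<in> K" "c' \<in> K"
    unfolding adjoin_def by blast
  moreover have "a + smul c w + (a' + smul c' w) = (a + a') + smul (c + c') w"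
    by (simp add: smul_add_left algebra_simps)
  ultimately show "u + v \<in> adjoin K A w"
    unfolding adjoin_def using is_subspace_add[OF A] subfield_add[OF K] by blast
next
  fix d u assume d: "d \<in> K" and "u \<in> adjoin K A w"
  then obtain a c where "u = a + smul c w" "a \<in> A" "c \<in> K"
    unfolding adjoin_def by blast
  moreover have "smul d (a + smul c w) = smul d a + smul (d * c) w"
    by (simp add: smul_add_right smul_smul)
  ultimately show "smul d u \<in> adjoin K A w"
    unfolding adjoin_def using is_subspace_smul[OF A d] subfield_mult[OF K d] by blast
qed

lemma subset_adjoin: "is_subfield K \<Longrightarrow> A \<subseteq> adjoin K A (w::'a::field vec3)"
  using adjoin_memI[of _ A 0 K w] subfield_0 by fastforce

lemma adjoin_subset:
  "is_subspace K E \<Longrightarrow> A \<subseteq> E \<Longrightarrow> w \<in> E \<Longrightarrow> adjoin K A w \<subseteq> (E::'a::field vec3 set)"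
  unfolding adjoin_def using is_subspace_add is_subspace_smul by blast

lemma card_adjoin:
  assumes K: "is_subfield K" and A: "is_subspace K A" and w: "w \<notin> A"
  shows "card (adjoin K A (w::'a::{field,finite} vec3)) = card A * card K"
proof -
  have "adjoin K A w = (\<lambda>(a, c). a + smul c w) ` (A \<times> K)"
    unfolding adjoin_def by auto
  moreover have "inj_on (\<lambda>(a, c). a + smul c w) (A \<times> K)"
  proof (rule inj_onI, clarify)
    fix a c a' c' assume h: "a \<in> A" "c \<in> K" "a' \<in> A" "c' \<in> K" "a + smul c w = a' + smul c' w"
    have "c = c'"
    proof (rule ccontr)
      assume "c \<noteq> c'"
      have "smul (c - c') w = a' - a"
        using h(5) by (simp add: smul_diff_left algebra_simps)
      then have "smul (inverse (c - c')) (smul (c - c') w) = smul (inverse (c - c')) (a' - a)"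
        by simp
      with \<open>c \<noteq> c'\<close> have "w = smul (inverse (c - c')) (a' - a)"
        by (simp add: smul_inverse_cancel)
      also have "\<dots> \<in> A"
        using h is_subspace_smul[OF A] is_subspace_diff[OF K A] subfield_inverse[OF K] subfield_diff[OF K]
        by simp
      finally show False
        using w by simp
    qed
    then show "a = a' \<and> c = c'"
      using h(5) by simp
  qed
  ultimately show ?thesis
    by (simp add: card_image card_cartesian_product)
qed

lemma obtain_adjoin_adjoin:
  fixes A W :: "'a::{field,finite} vec3 set"
  assumes K: "is_subfield K" and A: "is_subspace K A" and W: "is_subspace K W" and "A \<subseteq> W"
    and card: "card W = card A * card K * card K"
  obtains w1 w2 where "w1 \<in> W" "w1 \<notin> A" "W = adjoin K (adjoin K A w1) w2"
proof -
  have grow: "n < n * card K" if "0 < n" for n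
    using that card_subfield_ge_2[OF K] by simp
  have "0 < card A"
    using is_subspace_0[OF A] by (auto simp: card_gt_0_iff)
  then have "card A < card A * card K"
    by (rule grow)
  also have "\<dots> < card W"
    unfolding card using \<open>0 < card A\<close> card_subfield_ge_2[OF K] by (intro grow) simp
  finally have "A \<noteq> W"
    by auto
  then obtain w1 where w1: "w1 \<in> W" "w1 \<notin> A"
    using \<open>A \<subseteq> W\<close> by blast
  let ?A1 = "adjoin K A w1"
  have A1: "is_subspace K ?A1" "?A1 \<subseteq> W" "card ?A1 = card A * card K"
    using is_subspace_adjoin[OF K A] adjoin_subset[OF W \<open>A \<subseteq> W\<close> w1(1)] card_adjoin[OF K A w1(2)]
    by simp_all
  have "card ?A1 < card W"
    using grow[of "card A * card K"] A1(3) card \<open>0 < card A\<close> card_subfield_ge_2[OF K] by simp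
  then have "?A1 \<noteq> W"
    by auto
  then obtain w2 where w2: "w2 \<in> W" "w2 \<notin> ?A1"
    using A1(2) by blast
  have "adjoin K ?A1 w2 \<subseteq> W" "card (adjoin K ?A1 w2) = card W"
    using adjoin_subset[OF W A1(2) w2(1)] card_adjoin[OF K A1(1) w2(2)] A1(3) card by simp_all
  then have "W = adjoin K ?A1 w2"
    using card_subset_eq[of W "adjoin K ?A1 w2"] by simp
  then show ?thesis
    using that w1 by blast
qed

section \<open>Points, lines and blocking sets\<close>

lemma mem_pt_iff: "x \<in> pt u \<longleftrightarrow> (\<exists>c. x = smul c (u::'a::field vec3))"
  unfolding pt_def span_over_def by auto

lemma pt_eq_range: "pt u = range (\<lambda>c. smul c (u::'a::field vec3))"
  using mem_pt_iff[of _ u] by (auto simp del: split_paired_all)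

lemma mem_pt_self: "u \<in> pt (u::'a::field vec3)"
  unfolding mem_pt_iff by (metis smul_one)

lemma is_subspace_pt: "is_subspace K (pt (u::'a::field vec3))"
  unfolding is_subspace_def pt_eq_range
  by (auto simp: smul_smul simp flip: smul_add_left intro: range_eqI[of _ _ 0])

lemma card_pt: "u \<noteq> 0 \<Longrightarrow> card (pt (u::'a::{field,finite} vec3)) = CARD('a)"
  unfolding pt_eq_range by (rule card_image) (auto intro: injI simp: smul_right_cancel)

lemma pt_eq_if_mem:
  assumes "y \<in> pt x" "y \<noteq> 0"
  shows "pt y = pt (x::'a::field vec3)"
proof -
  obtain a where a: "y = smul a x"
    using assms(1) mem_pt_iff by blast
  with assms(2) have "a \<noteq> 0"
    by auto
  have "smul c y = smul (c * a) x" "smul c x = smul (c * inverse a) y" for c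
    using \<open>a \<noteq> 0\<close> by (simp_all add: a smul_smul mult.assoc)
  then have "z \<in> pt y \<longleftrightarrow> z \<in> pt x" for z
    unfolding mem_pt_iff by metis
  then show ?thesis
    by blast
qed

lemma card_line: "is_line (L::'a::{field,finite} vec3 set) \<Longrightarrow> card L = CARD('a) ^ 2"
  using card_subspace[OF subfield_UNIV, of L] unfolding is_line_def by simp

lemma line_adjoin:
  assumes "u \<noteq> 0" "w \<notin> pt (u::'a::{field,finite} vec3)"
  shows "is_line (adjoin UNIV (pt u) w)"
proof -
  have sub: "is_subspace UNIV (adjoin UNIV (pt u) w)"
    by (rule is_subspace_adjoin[OF subfield_UNIV is_subspace_pt])
  have "CARD('a) ^ sub_dim UNIV (adjoin UNIV (pt u) w) = card (adjoin UNIV (pt u) w)"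
    using card_subspace[OF subfield_UNIV sub] by simp
  also have "\<dots> = CARD('a) ^ 2"
    using card_adjoin[OF subfield_UNIV is_subspace_pt assms(2)] card_pt[OF assms(1)]
    by (simp add: power2_eq_square)
  moreover have "CARD('a) \<ge> 2"
    using card_subfield_ge_2[OF subfield_UNIV] by simp
  ultimately show ?thesis
    using sub unfolding is_line_def by (simp add: power_inject_exp)
qed

lemma line_neq_UNIV: "is_line (L::'a::{field,finite} vec3 set) \<Longrightarrow> L \<noteq> UNIV"
proof -
  assume L: "is_line L"
  have "CARD('a) \<ge> 2"
    using card_subfield_ge_2[OF subfield_UNIV] by simp
  then have "card L * 1 < card L * CARD('a)"
    using card_line[OF L] by (intro mult_strict_left_mono) auto
  then show "L \<noteq> UNIV"
    using card_line[OF L] by (auto simp: power2_eq_square)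
qed

text \<open>A blocking set meets the line through any point x of L and a point e off L only in x,
  so if it lies inside L it contains every point of L.\<close>

lemma blocking_linset_in_line:
  fixes W L :: "'a::{field,finite} vec3 set"
  assumes blocking: "blocking_set (linset W)" and L: "is_line L" and "W \<subseteq> L"
  shows "linset W = linset L"
proof
  show "linset W \<subseteq> linset L"
    unfolding linset_def using \<open>W \<subseteq> L\<close> by blast
  have subL: "is_subspace UNIV L"
    using L unfolding is_line_def by simp
  obtain e where e: "e \<notin> L"
    using line_neq_UNIV[OF L] by blast
  show "linset L \<subseteq> linset W"
  proof
    fix P assume "P \<in> linset L"
    then obtain x where x: "x \<in> L" "x \<noteq> 0" "P = pt x"
      unfolding linset_def by blast
    have ptx: "pt x \<subseteq> L"
      unfolding pt_eq_range using is_subspace_smul[OF subL _ x(1)] by blast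
    then have "is_line (adjoin UNIV (pt x) e)"
      using line_adjoin[OF x(2)] e by blast
    then obtain y where y: "y \<in> W" "y \<noteq> 0" "pt y \<subseteq> adjoin UNIV (pt x) e"
      using blocking unfolding blocking_set_def linset_def by blast
    then obtain a c where ac: "a \<in> pt x" "y = a + smul c e"
      using mem_pt_self unfolding adjoin_def by blast
    have "c = 0"
    proof (rule ccontr)
      assume "c \<noteq> 0"
      moreover have "y - a \<in> L"
        using is_subspace_diff[OF subfield_UNIV subL] \<open>W \<subseteq> L\<close> y(1) ptx ac(1) by blast
      moreover have "e = smul (inverse c) (y - a)"
        using ac(2) \<open>c \<noteq> 0\<close> smul_inverse_cancel[of c e] by simp
      ultimately have "e \<in> L"
        using is_subspace_smul[OF subL, of "inverse c" "y - a"] by simp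
      then show False
        using e by blast
    qed
    then have "pt y = P"
      using ac x(3) y(2) pt_eq_if_mem by simp
    then show "P \<in> linset W"
      using y(1,2) unfolding linset_def by blast
  qed
qed

lemma generator_notin_line_if_blocking:
  fixes W :: "'a::{field,finite} vec3 set"
  assumes blocking: "blocking_set (linset W)"
    and nontrivial: "\<not> (\<exists>l. is_line l \<and> linset W = linset l)"
    and v: "v \<noteq> 0" and w1: "w1 \<notin> pt v" and "A \<subseteq> pt v"
    and W_eq: "W = adjoin K (adjoin K A w1) w2"
  shows "w2 \<notin> adjoin UNIV (pt v) w1"
proof
  let ?L = "adjoin UNIV (pt v) w1"
  assume "w2 \<in> ?L"
  have L: "is_subspace K ?L"
    by (rule is_subspace_UNIV_imp[OF is_subspace_adjoin[OF subfield_UNIV is_subspace_pt]])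
  have "0 + smul 1 w1 \<in> ?L"
    by (rule adjoin_memI[OF is_subspace_0[OF is_subspace_pt] UNIV_I])
  moreover have "A \<subseteq> ?L"
    using \<open>A \<subseteq> pt v\<close> subset_adjoin[OF subfield_UNIV, of "pt v" w1] by blast
  ultimately have "adjoin K A w1 \<subseteq> ?L"
    by (intro adjoin_subset[OF L]) simp_all
  then have "adjoin K (adjoin K A w1) w2 \<subseteq> ?L"
    using \<open>w2 \<in> ?L\<close> by (rule adjoin_subset[OF L])
  then have "W \<subseteq> ?L"
    by (simp only: W_eq[symmetric])
  then have "linset W = linset ?L"
    by (rule blocking_linset_in_line[OF blocking line_adjoin[OF v w1]])
  then show False
    using nontrivial line_adjoin[OF v w1] by blast
qed

section \<open>Linear maps and projective equivalence\<close>

definition frame_map :: "'a::field vec3 \<Rightarrow> 'a vec3 \<Rightarrow> 'a vec3 \<Rightarrow> 'a vec3 \<Rightarrow> 'a vec3" where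
  "frame_map v1 v2 v3 u = smul (fst u) v1 + smul (fst (snd u)) v2 + smul (snd (snd u)) v3"

lemma inj_frame_map:
  assumes v: "v \<noteq> 0" and w1: "w1 \<notin> pt v" and w2: "w2 \<notin> adjoin UNIV (pt v) w1"
  shows "inj (frame_map v w1 (w2::'a::field vec3))"
proof -
  have "u = 0" if "frame_map v w1 w2 u = 0" for u
  proof -
    obtain a b c where u: "u = (a, b, c)"
      by (cases u) auto
    have sum0: "smul a v + smul b w1 + smul c w2 = 0"
      using that by (simp add: frame_map_def u)
    have "c = 0"
    proof (rule ccontr)
      assume "c \<noteq> 0"
      then have "w2 = smul (inverse c) (- (smul a v + smul b w1))"
        using sum0 smul_inverse_cancel[of c w2] by (simp add: add_eq_0_iff)
      also have "\<dots> = smul (- inverse c * a) v + smul (- inverse c * b) w1"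
        by (simp add: smul_add_right smul_diff_right smul_minus_left smul_minus_right smul_smul)
      finally show False
        using w2 adjoin_memI[of _ "pt v" "- inverse c * b" UNIV w1] mem_pt_iff by blast
    qed
    have "b = 0"
    proof (rule ccontr)
      assume "b \<noteq> 0"
      then have "w1 = smul (- inverse b * a) v"
        using sum0 \<open>c = 0\<close> smul_inverse_cancel[of b w1]
        by (simp add: add_eq_0_iff smul_minus_left smul_minus_right smul_smul)
      then show False
        using w1 mem_pt_iff by blast
    qed
    then have "a = 0"
      using sum0 \<open>c = 0\<close> v by (simp add: smul_eq_0_iff)
    then show "u = 0"
      using \<open>b = 0\<close> \<open>c = 0\<close> u by (simp add: zero_prod_def)
  qed
  moreover have "frame_map v w1 w2 (u - u') = frame_map v w1 w2 u - frame_map v w1 w2 u'" for u u'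
    by (simp add: frame_map_def smul_diff_left)
  ultimately show ?thesis
    by (metis injI right_minus_eq)
qed

lemma adjoin_adjoin_eq_frame_image:
  "adjoin K (adjoin K ((\<lambda>z. smul z v) ` S) w1) w2 = frame_map v w1 w2 ` (S \<times> K \<times> K)"
proof -
  have "x \<in> adjoin K (adjoin K ((\<lambda>z. smul z v) ` S) w1) w2 \<longleftrightarrow>
      (\<exists>a\<in>S. \<exists>b\<in>K. \<exists>c\<in>K. x = frame_map v w1 w2 (a, b, c))" for x
    unfolding Bex_def mem_adjoin_iff image_iff frame_map_def by (fastforce simp: add.assoc)
  moreover have "x \<in> frame_map v w1 w2 ` (S \<times> K \<times> K) \<longleftrightarrow>
      (\<exists>a\<in>S. \<exists>b\<in>K. \<exists>c\<in>K. x = frame_map v w1 w2 (a, b, c))" for x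
    by auto
  ultimately show ?thesis
    by blast
qed

definition vec3_linear :: "('a::field vec3 \<Rightarrow> 'a vec3) \<Rightarrow> bool" where
  "vec3_linear f \<longleftrightarrow> (\<forall>u v. f (u + v) = f u + f v) \<and> (\<forall>c v. f (smul c v) = smul c (f v))"

lemma
  assumes "vec3_linear f"
  shows vec3_linear_add: "f (u + v) = f u + f v"
    and vec3_linear_smul: "f (smul c v) = smul c (f v)"
  using assms unfolding vec3_linear_def by blast+

lemma vec3_linear_0: "vec3_linear f \<Longrightarrow> f 0 = 0"
  using vec3_linear_smul[of f 0 0] by simp

lemma vec3_linear_comp: "vec3_linear f \<Longrightarrow> vec3_linear g \<Longrightarrow> vec3_linear (f \<circ> g)"
  unfolding vec3_linear_def by (simp del: split_paired_All)

lemma vec3_linear_frame_map: "vec3_linear (frame_map v1 v2 v3)"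
  unfolding vec3_linear_def frame_map_def by (simp add: smul_def algebra_simps)

definition trace_normalize :: "'a::field \<Rightarrow> 'a \<Rightarrow> 'a vec3 \<Rightarrow> 'a vec3" where
  "trace_normalize l x0 u = (inverse l * (fst u - fst (snd u) * x0), snd u)"

lemma vec3_linear_trace_normalize: "vec3_linear (trace_normalize l x0)"
  unfolding vec3_linear_def trace_normalize_def by (simp add: smul_def algebra_simps)

lemma inj_trace_normalize: "l \<noteq> 0 \<Longrightarrow> inj (trace_normalize l x0)"
  by (rule injI) (auto simp: trace_normalize_def prod_eq_iff)

lemma mem_linset_iff: "P \<in> linset X \<longleftrightarrow> (\<exists>x\<in>X. x \<noteq> 0 \<and> P = pt x)"
  unfolding linset_def by blast

lemma image_linset:
  assumes f: "vec3_linear f" "inj f"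
  shows "(\<lambda>P. f ` P) ` linset X = linset (f ` X)"
proof -
  have pt: "f ` pt x = pt (f x)" for x
    unfolding pt_eq_range image_image vec3_linear_smul[OF f(1)] ..
  have nz: "f x = 0 \<longleftrightarrow> x = 0" for x
    using vec3_linear_0[OF f(1)] injD[OF f(2), of x 0] by auto
  have "P \<in> (\<lambda>P. f ` P) ` linset X \<longleftrightarrow> P \<in> linset (f ` X)" for P
  proof
    assume "P \<in> (\<lambda>P. f ` P) ` linset X"
    then obtain Q where Q: "P = f ` Q" "Q \<in> linset X"
      by (rule imageE)
    then obtain x where "x \<in> X" "x \<noteq> 0" "Q = pt x"
      unfolding mem_linset_iff by blast
    then show "P \<in> linset (f ` X)"
      unfolding mem_linset_iff using Q(1) by (intro bexI[of _ "f x"]) (simp_all add: pt nz)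
  next
    assume "P \<in> linset (f ` X)"
    then obtain x where x: "x \<in> X" "f x \<noteq> 0" "P = pt (f x)"
      unfolding mem_linset_iff by blast
    then have "pt x \<in> linset X"
      unfolding mem_linset_iff nz by blast
    then show "P \<in> (\<lambda>P. f ` P) ` linset X"
      using x(3) pt by (intro image_eqI[of _ _ "pt x"]) simp_all
  qed
  then show ?thesis
    by blast
qed

lemma proj_equiv_if_linear_image:
  fixes f :: "'a::{field,finite} vec3 \<Rightarrow> 'a vec3"
  assumes f: "vec3_linear f" "inj f" and U: "f ` U = W"
  shows "proj_equiv (linset W) (linset U)"
proof -
  have "bij f"
    using f(2) by (simp add: bij_def finite_UNIV_inj_surj)
  define g where "g = inv_into UNIV f"
  have g: "bij g" "inj g"
    using \<open>bij f\<close> bij_imp_bij_inv bij_is_inj unfolding g_def by blast+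
  have fg: "f (g u) = u" for u
    using \<open>bij f\<close> unfolding g_def by (simp add: bij_is_surj surj_f_inv_f)
  have gadd: "g (u + v) = g u + g v" for u v
    by (rule injD[OF f(2)]) (simp add: fg vec3_linear_add[OF f(1)])
  have gsmul: "g (smul c v) = smul c (g v)" for c v
    by (rule injD[OF f(2)]) (simp add: fg vec3_linear_smul[OF f(1)])
  have "g ` W = U"
    using U f(2) unfolding g_def by (auto simp: inv_f_f)
  then have "(\<lambda>P. g ` P) ` linset W = linset U"
    using image_linset[of g W] gadd gsmul g(2) unfolding vec3_linear_def by blast
  then show ?thesis
    unfolding proj_equiv_def using g(1) gadd gsmul by blast
qed

section \<open>Linear functionals\<close>

definition linear_functional :: "'a::field set \<Rightarrow> ('a \<Rightarrow> 'a) \<Rightarrow> bool" where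
  "linear_functional K \<phi> \<longleftrightarrow> (\<forall>x y. \<phi> (x + y) = \<phi> x + \<phi> y)
     \<and> (\<forall>c\<in>K. \<forall>x. \<phi> (c * x) = c * \<phi> x) \<and> (\<forall>x. \<phi> x \<in> K)"

lemma linear_functional_sum:
  assumes "linear_functional K \<phi>"
  shows "\<phi> (sum f A) = (\<Sum>i\<in>A. \<phi> (f i))"
proof -
  have add: "\<phi> (x + y) = \<phi> x + \<phi> y" for x y
    using assms unfolding linear_functional_def by blast
  then have "\<phi> 0 = 0"
    by (metis add_cancel_right_right)
  then show ?thesis
    by (induction A rule: infinite_finite_induct) (simp_all add: add)
qed

text \<open>The field is identified with the K-subspace of vectors (x, 0, 0), so that the basis
  theory of vec3 applies to it.\<close>

lemma obtain_field_basis: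
  assumes K: "is_subfield K"
  obtains B :: "'a::{field,finite} set" where "card K ^ card B = CARD('a)"
    "\<And>x. \<exists>c. (\<forall>b\<in>B. c b \<in> K) \<and> x = (\<Sum>b\<in>B. c b * b)"
proof -
  define E :: "'a vec3 set" where "E = {u. snd u = 0}"
  have "is_subspace K E"
    unfolding is_subspace_def E_def by (auto simp: smul_def zero_prod_def)
  then obtain B where B: "finite B" "span_over K B = E" "independent_over K B"
    by (rule obtain_basis[OF K _ finite])
  have inj: "inj_on fst E"
    unfolding E_def by (auto intro!: inj_onI simp: prod_eq_iff)
  moreover have "fst ` E = UNIV"
    unfolding E_def by (auto intro: image_eqI[of _ _ "(_, 0)"])
  ultimately have "card K ^ card B = CARD('a)"
    using card_span_over_independent[OF K B(1,3)] B(2) by (metis card_image)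
  moreover have "B \<subseteq> E"
    using B(2) mem_span_over[OF K B(1)] by blast
  then have inj_B: "inj_on fst B"
    using inj inj_on_subset by blast
  have "\<exists>c. (\<forall>b\<in>fst ` B. c b \<in> K) \<and> x = (\<Sum>b\<in>fst ` B. c b * b)" for x
  proof -
    have "(x, 0, 0) \<in> span_over K B"
      using B(2) unfolding E_def by (simp add: zero_prod_def)
    then obtain c where c: "\<forall>b\<in>B. c b \<in> K" "(x, 0, 0) = (\<Sum>b\<in>B. smul (c b) b)"
      unfolding span_over_def by blast
    define c' where "c' = c \<circ> inv_into B fst"
    have "x = (\<Sum>b\<in>B. c b * fst b)"
      using arg_cong[OF c(2), of fst] by (simp add: fst_sum)
    also have "\<dots> = (\<Sum>b\<in>fst ` B. c' b * b)"
      using inj_B by (simp add: sum.reindex c'_def)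
    moreover have "\<forall>b\<in>fst ` B. c' b \<in> K"
      using c(1) by (auto simp: c'_def inv_into_into)
    ultimately show ?thesis
      by blast
  qed
  ultimately show ?thesis
    using that[of "fst ` B"] inj_B by (simp add: card_image)
qed

lemma card_linear_functionals_le:
  assumes K: "is_subfield K"
  shows "card {\<phi> :: 'a::{field,finite} \<Rightarrow> 'a. linear_functional K \<phi>} \<le> CARD('a)"
proof -
  obtain B :: "'a set" where card_B: "card K ^ card B = CARD('a)"
    and span: "\<And>x. \<exists>c. (\<forall>b\<in>B. c b \<in> K) \<and> x = (\<Sum>b\<in>B. c b * b)"
    using obtain_field_basis[OF K] by blast
  have "inj_on (\<lambda>\<phi>. restrict \<phi> B) {\<phi>. linear_functional K \<phi>}"
  proof (rule inj_onI, rule ext)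
    fix \<phi> \<psi> x
    assume \<phi>: "\<phi> \<in> {\<phi>. linear_functional K \<phi>}" and \<psi>: "\<psi> \<in> {\<phi>. linear_functional K \<phi>}"
      and "restrict \<phi> B = restrict \<psi> B"
    then have on_B: "\<phi> b = \<psi> b" if "b \<in> B" for b
      using that by (metis restrict_apply')
    obtain c where c: "\<forall>b\<in>B. c b \<in> K" "x = (\<Sum>b\<in>B. c b * b)"
      using span by blast
    have expand: "\<chi> x = (\<Sum>b\<in>B. c b * \<chi> b)" if "linear_functional K \<chi>" for \<chi>
      unfolding c(2) linear_functional_sum[OF that]
      using that c(1) unfolding linear_functional_def by simp
    have "\<phi> x = (\<Sum>b\<in>B. c b * \<phi> b)"
      using expand \<phi> by simp
    also have "\<dots> = (\<Sum>b\<in>B. c b * \<psi> b)"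
      using on_B by simp
    also have "\<dots> = \<psi> x"
      using expand \<psi> by simp
    finally show "\<phi> x = \<psi> x" .
  qed
  moreover have "(\<lambda>\<phi>. restrict \<phi> B) ` {\<phi>. linear_functional K \<phi>} \<subseteq> B \<rightarrow>\<^sub>E K"
    unfolding linear_functional_def by auto
  ultimately have "card {\<phi>. linear_functional K \<phi>} \<le> card (B \<rightarrow>\<^sub>E K)"
    using card_inj_on_le[of _ _ "B \<rightarrow>\<^sub>E K"] by (simp add: finite_PiE)
  then show ?thesis
    using card_B by (simp add: card_PiE)
qed

lemma complement_coefficient_unique:
  fixes S :: "'a::field set"
  assumes K: "is_subfield K" and y: "y \<notin> S"
    and Sadd: "\<And>a b. a \<in> S \<Longrightarrow> b \<in> S \<Longrightarrow> a + b \<in> S"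
    and Smult: "\<And>c a. c \<in> K \<Longrightarrow> a \<in> S \<Longrightarrow> c * a \<in> S"
    and c: "c \<in> K" "x - c * y \<in> S" and c': "c' \<in> K" "x - c' * y \<in> S"
  shows "c = c'"
proof (rule ccontr)
  assume "c \<noteq> c'"
  have "- 1 * (x - c * y) \<in> S"
    using Smult[OF subfield_uminus[OF K subfield_1[OF K]] c(2)] .
  from Sadd[OF c'(2) this] have "(c - c') * y \<in> S"
    by (simp add: algebra_simps)
  then have "inverse (c - c') * ((c - c') * y) \<in> S"
    by (rule Smult[OF subfield_inverse[OF K subfield_diff[OF K c(1) c'(1)]]])
  then show False
    using \<open>c \<noteq> c'\<close> y by (simp add: mult.assoc[symmetric])
qed

lemma exists_complement_coefficient:
  fixes S :: "'a::{field,finite} set"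
  assumes K: "is_subfield K" and S0: "0 \<in> S"
    and Sadd: "\<And>a b. a \<in> S \<Longrightarrow> b \<in> S \<Longrightarrow> a + b \<in> S"
    and Smult: "\<And>c a. c \<in> K \<Longrightarrow> a \<in> S \<Longrightarrow> c * a \<in> S"
    and card: "card S * card K = CARD('a)"
  shows "\<exists>y. \<forall>x. \<exists>!c. c \<in> K \<and> x - c * y \<in> S"
proof -
  have "card S > 0"
    using S0 by (auto simp: card_gt_0_iff)
  then have "card S * 1 < card S * card K"
    using card_subfield_ge_2[OF K] by (intro mult_strict_left_mono) simp_all
  then have "S \<noteq> UNIV"
    using card by auto
  then obtain y where y: "y \<notin> S"
    by blast
  note unique = complement_coefficient_unique[OF K y Sadd Smult]
  let ?g = "\<lambda>(a, c). a + c * y"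
  have "inj_on ?g (S \<times> K)"
  proof (rule inj_onI, clarify)
    fix a c a' c' assume "a \<in> S" "c \<in> K" "a' \<in> S" "c' \<in> K" and eq: "a + c * y = a' + c' * y"
    have "a + c * y - c * y \<in> S" "a + c * y - c' * y \<in> S"
      using \<open>a \<in> S\<close> \<open>a' \<in> S\<close> by (simp, simp add: eq)
    then have "c = c'"
      using unique \<open>c \<in> K\<close> \<open>c' \<in> K\<close> by blast
    then show "a = a' \<and> c = c'"
      using eq by simp
  qed
  then have "card (?g ` (S \<times> K)) = CARD('a)"
    using card by (simp add: card_image card_cartesian_product)
  then have "?g ` (S \<times> K) = UNIV"
    by (simp add: card_subset_eq)
  then have "\<exists>c. c \<in> K \<and> x - c * y \<in> S" for x
    by (auto elim!: equalityE dest!: subsetD[of UNIV _ x])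
  then show ?thesis
    using unique by blast
qed

lemma hyperplane_eq_kernel:
  fixes S :: "'a::{field,finite} set"
  assumes K: "is_subfield K" and "0 \<in> S"
    and Sadd: "\<And>a b. a \<in> S \<Longrightarrow> b \<in> S \<Longrightarrow> a + b \<in> S"
    and Smult: "\<And>c a. c \<in> K \<Longrightarrow> a \<in> S \<Longrightarrow> c * a \<in> S"
    and "card S * card K = CARD('a)"
  obtains \<phi> where "linear_functional K \<phi>" "S = {z. \<phi> z = 0}"
proof -
  obtain y where y: "\<And>x. \<exists>!c. c \<in> K \<and> x - c * y \<in> S"
    using exists_complement_coefficient[OF assms] by blast
  define \<phi> where "\<phi> x = (THE c. c \<in> K \<and> x - c * y \<in> S)" for x
  have \<phi>: "\<phi> x \<in> K" "x - \<phi> x * y \<in> S" for x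
    using theI'[OF y[of x]] unfolding \<phi>_def by blast+
  have \<phi>_eq: "\<phi> x = c" if "c \<in> K" "x - c * y \<in> S" for x c
    unfolding \<phi>_def using y that by blast
  have "\<phi> (x + x') = \<phi> x + \<phi> x'" for x x'
  proof (rule \<phi>_eq)
    show "\<phi> x + \<phi> x' \<in> K"
      using \<phi> subfield_add[OF K] by blast
    have "x + x' - (\<phi> x + \<phi> x') * y = (x - \<phi> x * y) + (x' - \<phi> x' * y)"
      by (simp add: algebra_simps)
    also have "\<dots> \<in> S"
      by (rule Sadd[OF \<phi>(2) \<phi>(2)])
    finally show "x + x' - (\<phi> x + \<phi> x') * y \<in> S" .
  qed
  moreover have "\<phi> (c * x) = c * \<phi> x" if "c \<in> K" for c x
  proof (rule \<phi>_eq)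
    show "c * \<phi> x \<in> K"
      using \<phi> subfield_mult[OF K that] by blast
    have "c * x - c * \<phi> x * y = c * (x - \<phi> x * y)"
      by (simp add: algebra_simps)
    also have "\<dots> \<in> S"
      by (rule Smult[OF that \<phi>(2)])
    finally show "c * x - c * \<phi> x * y \<in> S" .
  qed
  moreover have "\<phi> z = 0 \<longleftrightarrow> z \<in> S" for z
    using \<phi>[of z] \<phi>_eq[of 0 z] subfield_0[OF K] by auto
  ultimately show ?thesis
    using that[of \<phi>] \<phi>(1) unfolding linear_functional_def by blast
qed

section \<open>The trace of a finite field extension\<close>

locale fq_extension =
  fixes q s :: nat and field_type :: "'a::{field,finite} itself"
  assumes q_CHAR_power: "\<exists>k>0. q = CHAR('a) ^ k"
    and s_pos: "s > 0"
    and card_field: "CARD('a) = q ^ s"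
begin

abbreviation K :: "'a set" where "K \<equiv> subfield_q q"

abbreviation Tr :: "'a \<Rightarrow> 'a" where "Tr \<equiv> trace q s"

lemma q_ge_2: "q \<ge> 2"
proof -
  obtain k where "k > 0" "q = CHAR('a) ^ k"
    using q_CHAR_power by blast
  moreover have "CHAR('a) \<ge> 2"
    using prime_CHAR_finite[where 'a='a] by (simp add: prime_ge_2_nat)
  ultimately show ?thesis
    using self_le_power[of "CHAR('a)" k] by simp
qed

lemma q_power_eq_CHAR_power:
  obtains n where "q ^ i = CHAR('a) ^ n"
  using q_CHAR_power by (metis power_mult)

lemma frobenius_add: "(x + y) ^ (q ^ i) = x ^ (q ^ i) + (y ^ (q ^ i) :: 'a)"
  by (rule q_power_eq_CHAR_power[of i]) (rule freshmans_dream'[OF prime_CHAR_finite])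

lemma frobenius_sum: "sum f A ^ (q ^ i) = (\<Sum>j\<in>A. f j ^ (q ^ i) :: 'a)"
  by (rule q_power_eq_CHAR_power[of i]) (rule freshmans_dream_sum'[OF prime_CHAR_finite])

lemma is_subfield_K: "is_subfield K"
proof -
  have add: "(x + y) ^ q = x ^ q + y ^ q" for x y :: 'a
    using frobenius_add[of x y 1] by simp
  have "q > 0"
    using q_ge_2 by simp
  then have "(- x) ^ q = - (x ^ q)" for x :: 'a
    using add[of x "- x"] by (simp add: add_eq_0_iff power_0_left)
  then show ?thesis
    unfolding is_subfield_def subfield_q_def
    using \<open>q > 0\<close> by (simp add: add power_mult_distrib power_inverse power_0_left)
qed

lemma subfield_q_power: "c \<in> K \<Longrightarrow> c ^ (q ^ i) = c"
  by (induction i) (simp_all add: subfield_q_def power_mult flip: power_Suc2)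

lemma power_q_s: "x ^ (q ^ s) = (x :: 'a)"
  using power_card_eq_self[of x] card_field by simp

lemma trace_add: "Tr (x + y) = Tr x + Tr y"
  unfolding trace_def by (simp add: frobenius_add sum.distrib)

lemma trace_diff: "Tr (x - y) = Tr x - Tr y"
  using trace_add[of "x - y" y] by (simp add: algebra_simps)

lemma trace_scale: "c \<in> K \<Longrightarrow> Tr (c * x) = c * Tr x"
  unfolding trace_def by (simp add: power_mult_distrib subfield_q_power sum_distrib_left)

text \<open>Frobenius permutes the summands of the trace cyclically, since x ^ (q ^ s) = x.\<close>

lemma trace_mem: "Tr x \<in> K"
proof -
  have "Tr x ^ q = (\<Sum>i<s. x ^ (q ^ Suc i))"
    unfolding trace_def using frobenius_sum[of "\<lambda>i. x ^ (q ^ i)" "{..<s}" 1]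
    by (simp add: power_mult[symmetric] mult.commute)
  also have "\<dots> = Tr x"
    using sum.lessThan_Suc_shift[of "\<lambda>i. x ^ (q ^ i)" s] power_q_s
    unfolding trace_def by (simp add: add.commute)
  finally show ?thesis
    by (simp add: subfield_q_def)
qed

lemma card_trace_kernel_le: "card {x. Tr x = 0} \<le> q ^ (s - 1)"
proof -
  define P :: "'a poly" where "P = (\<Sum>i<s. monom 1 (q ^ i))"
  have "poly P x = Tr x" for x
    unfolding P_def trace_def by (simp add: poly_sum poly_monom)
  moreover have "coeff P (q ^ (s - 1)) = 1"
    unfolding P_def coeff_sum using s_pos q_ge_2 by (simp add: power_inject_exp sum.delta)
  then have "P \<noteq> 0"
    by auto
  moreover have "degree P \<le> q ^ (s - 1)"
    unfolding P_def
  proof (rule degree_sum_le)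
    fix i assume "i \<in> {..<s}"
    then have "q ^ i \<le> q ^ (s - 1)"
      using q_ge_2 by (intro power_increasing) auto
    then show "degree (monom (1::'a) (q ^ i)) \<le> q ^ (s - 1)"
      by (simp add: degree_monom_eq)
  qed simp
  ultimately show ?thesis
    using card_poly_roots_bound[of P] by simp
qed

lemma card_K_le: "card K \<le> q"
proof -
  define P :: "'a poly" where "P = monom 1 q - monom 1 1"
  have "poly P x = x ^ q - x" for x
    unfolding P_def by (simp add: poly_monom)
  then have "K = {x. poly P x = 0}"
    by (auto simp: subfield_q_def)
  moreover have "coeff P q = 1"
    unfolding P_def using q_ge_2 by simp
  then have "card {x. poly P x = 0} \<le> degree P"
    by (intro card_poly_roots_bound) auto
  moreover have "degree P \<le> q"
    unfolding P_def using q_ge_2 by (intro degree_diff_le) (simp_all add: degree_monom_eq)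
  ultimately show ?thesis
    by simp
qed

lemma exists_trace_1: "\<exists>x. Tr x = 1"
proof -
  have "q ^ (s - 1) < q ^ s"
    using q_ge_2 s_pos by (intro power_strict_increasing) auto
  then have "card {x. Tr x = 0} < CARD('a)"
    using card_trace_kernel_le card_field by simp
  then have "{x. Tr x = 0} \<noteq> UNIV"
    by auto
  then obtain x where "Tr x \<noteq> 0"
    by auto
  then have "Tr (inverse (Tr x) * x) = 1"
    using trace_scale[OF subfield_inverse[OF is_subfield_K trace_mem]] by simp
  then show ?thesis ..
qed

text \<open>With Tr x0 = 1, the map (t, c) \<mapsto> t + c x0 is a bijection from ker Tr \<times> K onto the
  field, and ker Tr has at most q ^ (s - 1) elements.\<close>

lemma card_K: "card K = q"
proof -
  obtain x0 where x0: "Tr x0 = 1"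
    using exists_trace_1 by blast
  let ?T = "{x. Tr x = 0}"
  let ?g = "\<lambda>(t, c). t + c * x0"
  have "inj_on ?g (?T \<times> K)"
  proof (rule inj_onI, clarify)
    fix t c t' c' assume "Tr t = 0" "c \<in> K" "Tr t' = 0" "c' \<in> K" and eq: "t + c * x0 = t' + c' * x0"
    have "Tr (t + c * x0) = Tr (t' + c' * x0)"
      using eq by simp
    then have "c = c'"
      using \<open>Tr t = 0\<close> \<open>Tr t' = 0\<close> \<open>c \<in> K\<close> \<open>c' \<in> K\<close> by (simp add: trace_add trace_scale x0)
    then show "t = t' \<and> c = c'"
      using eq by simp
  qed
  moreover have "?g ` (?T \<times> K) = UNIV"
  proof -
    have "x = ?g (x - Tr x * x0, Tr x)" "x - Tr x * x0 \<in> ?T" for x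
      by (simp_all add: trace_diff trace_scale[OF trace_mem] x0)
    then show ?thesis
      using trace_mem by blast
  qed
  ultimately have "card (?T \<times> K) = CARD('a)"
    using card_image by fastforce
  then have "card ?T * card K = q ^ s"
    using card_field by (simp add: card_cartesian_product)
  also have "\<dots> = q ^ (s - 1) * q"
    using s_pos by (simp add: power_eq_if)
  finally have "q ^ (s - 1) * q \<le> q ^ (s - 1) * card K"
    using mult_le_mono1[OF card_trace_kernel_le, of "card K"] by simp
  then show ?thesis
    using card_K_le q_ge_2 by simp
qed

lemma linear_functional_trace_form: "linear_functional K (\<lambda>x. Tr (l * x))"
  unfolding linear_functional_def
  by (simp add: distrib_left trace_add trace_mem trace_scale mult.left_commute[of l])

text \<open>Distinct l give distinct trace forms (Tr is onto), and there are no more K-linear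
  functionals than field elements.\<close>

lemma linear_functional_imp_trace_form:
  assumes "linear_functional K \<phi>"
  obtains l where "\<phi> = (\<lambda>x. Tr (l * x))"
proof -
  obtain x0 where x0: "Tr x0 = 1"
    using exists_trace_1 by blast
  define form where "form l = (\<lambda>x. Tr (l * x))" for l
  have "inj form"
  proof (rule injI, rule ccontr)
    fix l l' assume "form l = form l'" "l \<noteq> l'"
    then have "Tr (l * (inverse (l - l') * x0)) = Tr (l' * (inverse (l - l') * x0))"
      using fun_cong[of "form l" "form l'" "inverse (l - l') * x0"] unfolding form_def by simp
    then have "Tr ((l - l') * inverse (l - l') * x0) = 0"
      by (simp add: left_diff_distrib trace_diff mult.assoc)
    then show False
      using \<open>l \<noteq> l'\<close> x0 by simp
  qed
  then have "card (range form) = CARD('a)"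
    by (simp add: card_image)
  moreover have "range form \<subseteq> {\<phi>. linear_functional K \<phi>}"
    unfolding form_def using linear_functional_trace_form by blast
  ultimately have "range form = {\<phi>. linear_functional K \<phi>}"
    using card_linear_functionals_le[OF is_subfield_K] by (intro card_seteq) simp_all
  then show ?thesis
    using assms that unfolding form_def by blast
qed

lemma hyperplane_eq_trace_kernel:
  assumes S0: "0 \<in> S" and Sadd: "\<And>a b. a \<in> S \<Longrightarrow> b \<in> S \<Longrightarrow> a + b \<in> S"
    and Smult: "\<And>c a. c \<in> K \<Longrightarrow> a \<in> S \<Longrightarrow> c * a \<in> S"
    and card: "card S = q ^ (s - 1)"
  obtains l where "l \<noteq> 0" "S = {z. Tr (l * z) = 0}"
proof -
  have "card S * card K = CARD('a)"
    using card card_K card_field s_pos by (simp add: power_eq_if)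
  then obtain \<phi> where "linear_functional K \<phi>" "S = {z. \<phi> z = 0}"
    using hyperplane_eq_kernel[OF is_subfield_K S0 Sadd Smult] by blast
  moreover obtain l where "\<phi> = (\<lambda>x. Tr (l * x))"
    using linear_functional_imp_trace_form[OF \<open>linear_functional K \<phi>\<close>] by blast
  ultimately have l: "S = {z. Tr (l * z) = 0}"
    by simp
  have "q ^ (s - 1) < CARD('a)"
    using q_ge_2 s_pos card_field by (simp add: power_strict_increasing)
  then have "S \<noteq> UNIV"
    using card by auto
  then have "l \<noteq> 0"
    using l trace_scale[of 0 0] subfield_0[OF is_subfield_K] by auto
  then show ?thesis
    using that l by blast
qed

lemma trace_normalize_U_trace:
  assumes l: "l \<noteq> 0" and x0: "Tr x0 = 1"
  shows "trace_normalize l x0 ` U_trace q s = {a. Tr (l * a) = 0} \<times> K \<times> K"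
proof
  show "trace_normalize l x0 ` U_trace q s \<subseteq> {a. Tr (l * a) = 0} \<times> K \<times> K"
  proof
    fix u assume "u \<in> trace_normalize l x0 ` U_trace q s"
    then obtain x y where "y \<in> K" "u = trace_normalize l x0 (x, Tr x, y)"
      unfolding U_trace_def by blast
    moreover have "Tr (l * (inverse l * (x - Tr x * x0))) = 0"
    proof -
      have "Tr (l * (inverse l * (x - Tr x * x0))) = Tr (x - Tr x * x0)"
        using l by (metis mult.assoc mult_1 right_inverse)
      also have "\<dots> = 0"
        using x0 by (simp add: trace_diff trace_scale[OF trace_mem])
      finally show ?thesis .
    qed
    ultimately show "u \<in> {a. Tr (l * a) = 0} \<times> K \<times> K"
      using trace_mem by (simp add: trace_normalize_def)
  qed
  show "{a. Tr (l * a) = 0} \<times> K \<times> K \<subseteq> trace_normalize l x0 ` U_trace q s"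
  proof
    fix u assume "u \<in> {a. Tr (l * a) = 0} \<times> K \<times> K"
    then obtain a b c where u: "u = (a, b, c)" "Tr (l * a) = 0" "b \<in> K" "c \<in> K"
      by auto
    then have "Tr (l * a + b * x0) = b"
      using x0 by (simp add: trace_add trace_scale)
    then have "(l * a + b * x0, b, c) \<in> U_trace q s"
      unfolding U_trace_def using u(4) by (intro CollectI exI[of _ "l * a + b * x0"] exI[of _ c]) simp
    moreover have "u = trace_normalize l x0 (l * a + b * x0, b, c)"
      using l u(1) by (simp add: trace_normalize_def)
    ultimately show "u \<in> trace_normalize l x0 ` U_trace q s"
      by blast
  qed
qed

lemma weight_point_trace_kernel:
  fixes W :: "'a vec3 set"
  assumes W: "is_subspace K W" and v: "v \<noteq> 0" and card: "card (W \<inter> pt v) = q ^ (s - 1)"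
  obtains l where "l \<noteq> 0" "W \<inter> pt v = (\<lambda>z. smul z v) ` {z. Tr (l * z) = 0}"
proof -
  define S where "S = {z. smul z v \<in> W}"
  have A: "W \<inter> pt v = (\<lambda>z. smul z v) ` S"
    unfolding S_def pt_eq_range by auto
  have "inj (\<lambda>z. smul z v)"
    using v by (auto intro: injI simp: smul_right_cancel)
  then have "card S = q ^ (s - 1)"
    using card unfolding A by (simp add: card_image inj_on_subset)
  moreover have "0 \<in> S"
    using is_subspace_0[OF W] unfolding S_def by simp
  moreover have "a + b \<in> S" if "a \<in> S" "b \<in> S" for a b
    using is_subspace_add[OF W] that unfolding S_def by (simp add: smul_add_left)
  moreover have "c * a \<in> S" if "c \<in> K" "a \<in> S" for c a
    using is_subspace_smul[OF W that(1), of "smul a v"] that(2) unfolding S_def by (simp add: smul_smul)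
  ultimately obtain l where "l \<noteq> 0" "S = {z. Tr (l * z) = 0}"
    using hyperplane_eq_trace_kernel[of S] by blast
  then show ?thesis
    using that A by blast
qed

lemma linset_proj_equiv_U_trace:
  fixes W :: "'a vec3 set"
  assumes W: "is_subspace K W" and dim: "sub_dim K W = s + 1"
    and blocking: "blocking_set (linset W)" and nontrivial: "\<not> (\<exists>l. is_line l \<and> linset W = linset l)"
    and P: "P \<in> linset W" "weight K W P = s - 1"
  shows "proj_equiv (linset W) (linset (U_trace q s))"
proof -
  obtain v where v: "v \<in> W" "v \<noteq> 0" "P = pt v"
    using P(1) unfolding linset_def by blast
  let ?A = "W \<inter> pt v"
  have A: "is_subspace K ?A"
    by (rule is_subspace_Int[OF W is_subspace_pt])
  have card_A: "card ?A = q ^ (s - 1)"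
    using card_subspace[OF is_subfield_K A] P(2) v(3) card_K unfolding weight_def by simp
  have "card W = card ?A * card K * card K"
    using card_subspace[OF is_subfield_K W] dim card_A card_K s_pos by (cases s) simp_all
  then obtain w1 w2 where w: "w1 \<in> W" "w1 \<notin> ?A" and W_eq: "W = adjoin K (adjoin K ?A w1) w2"
    by (rule obtain_adjoin_adjoin[OF is_subfield_K A W Int_lower1])
  have w1: "w1 \<notin> pt v"
    using w(1,2) by blast
  have w2: "w2 \<notin> adjoin UNIV (pt v) w1"
    by (rule generator_notin_line_if_blocking[OF blocking nontrivial v(2) w1
          Int_lower2 W_eq])
  obtain l where l: "l \<noteq> 0" "?A = (\<lambda>z. smul z v) ` {z. Tr (l * z) = 0}"
    by (rule weight_point_trace_kernel[OF W v(2) card_A])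
  obtain x0 where x0: "Tr x0 = 1"
    using exists_trace_1 by blast
  let ?f = "frame_map v w1 w2 \<circ> trace_normalize l x0"
  have "?f ` U_trace q s = frame_map v w1 w2 ` ({z. Tr (l * z) = 0} \<times> K \<times> K)"
    by (simp only: image_comp[symmetric] trace_normalize_U_trace[OF l(1) x0])
  also have "\<dots> = adjoin K (adjoin K ?A w1) w2"
    unfolding l(2) by (rule adjoin_adjoin_eq_frame_image[symmetric])
  also have "\<dots> = W"
    by (rule W_eq[symmetric])
  finally show ?thesis
    using vec3_linear_comp[OF vec3_linear_frame_map vec3_linear_trace_normalize]
      inj_compose[OF inj_frame_map[OF v(2) w1 w2] inj_trace_normalize[OF l(1)]]
    by (intro proj_equiv_if_linear_image)
qed

end

theorem proposition2p5:
  fixes W :: "'a::{field,finite} vec3 set" and q s :: nat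
  assumes "\<exists>p k. prime p \<and> k \<ge> 1 \<and> q = p ^ k"
    and "s \<ge> 2"
    and "CARD('a) = q ^ s"
    and "is_subspace (subfield_q q) W"
    and "sub_dim (subfield_q q) W = s + 1"
    and "blocking_set (linset W)"
    and "\<not> (\<exists>l. is_line l \<and> linset W = linset l)"
    and "\<exists>P\<in>linset W. weight (subfield_q q) W P = s - 1"
  shows "proj_equiv (linset W) (linset (U_trace q s))"
proof -
  obtain p k where pk: "prime p" "k \<ge> 1" "q = p ^ k"
    using assms(1) by blast
  then have "CHAR('a) = p"
    using assms(2,3) by (intro CHAR_eq_if_card_prime_power[of p "k * s"]) (simp_all add: power_mult)
  then interpret fq_extension q s "TYPE('a)"
    using pk assms(2,3) by unfold_locales (auto intro!: exI[of _ k])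
  obtain P where "P \<in> linset W" "weight (subfield_q q) W P = s - 1"
    using assms(8) by blast
  then show ?thesis
    by (rule linset_proj_equiv_U_trace[OF assms(4-7)])
qed

end
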